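(* Let $g\in H(\mathbb D)$ and $\alpha,\beta\geq0$. Then: (1) $S_g: H^{\infty}_\alpha\rightarrow H^{\infty}_0$ is compact if and only if $g\equiv0$; (2) if $\beta>0$, then $S_g: H^{\infty}_\alpha\rightarrow H^{\infty}_\beta$ is compact if and only if $$\lim_{|z|\rightarrow1^-}(1-|z|^2)^{\beta-\alpha}|g(z)|=0\,.$$
   Context: $\mathbb D$ is the open unit disk and $H(\mathbb D)$ the space of analytic functions on $\mathbb D$. For $\alpha\geq0$, $H^{\infty}_\alpha=\{f\in H(\mathbb D): \|f\|_{H^\infty_\alpha}:=\sup_{z\in\mathbb D}(1-|z|^2)^\alpha|f(z)|<\infty\}$; $H^\infty_0$ is the space of bounded analytic functions with sup norm. For $g\in H(\mathbb D)$, $(S_gf)(z)=\int_0^z f'(\omega)g(\omega)\,d\omega$. *)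

theory Defs
  imports "HOL-Complex_Analysis.Complex_Analysis"
begin

definition Hinf :: "real \<Rightarrow> (complex \<Rightarrow> complex) set" where
  "Hinf a = {f. f holomorphic_on ball 0 1 \<and>
      bounded ((\<lambda>z. (1 - (cmod z)\<^sup>2) powr a * cmod (f z)) ` ball 0 1)}"

definition wnorm :: "real \<Rightarrow> (complex \<Rightarrow> complex) \<Rightarrow> real" where
  "wnorm a f = (SUP z\<in>ball 0 1. (1 - (cmod z)\<^sup>2) powr a * cmod (f z))"

definition Sg :: "(complex \<Rightarrow> complex) \<Rightarrow> (complex \<Rightarrow> complex) \<Rightarrow> complex \<Rightarrow> complex" where
  "Sg g f z = contour_integral (linepath 0 z) (\<lambda>w. deriv f w * g w)"

definition compact_Sg :: "real \<Rightarrow> real \<Rightarrow> (complex \<Rightarrow> complex) \<Rightarrow> bool" where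
  "compact_Sg a b g \<longleftrightarrow>
     (\<forall>f\<in>Hinf a. Sg g f \<in> Hinf b) \<and>
     (\<forall>F::nat \<Rightarrow> complex \<Rightarrow> complex. (\<forall>n. F n \<in> Hinf a \<and> wnorm a (F n) \<le> 1) \<longrightarrow>
        (\<exists>r h. strict_mono r \<and> h \<in> Hinf b \<and>
           (\<lambda>n. wnorm b (\<lambda>z. Sg g (F (r n)) z - h z)) \<longlonglongrightarrow> 0))"

end

theory Submission
  imports Defs
begin

text \<open>
  For f in the unit ball of H^\<infinity>_a, Cauchy's estimate gives |f'(w)| \<le> 4^{a+1} (1-|w|^2)^{-a-1}.
  Hence where (1-|w|^2)^{b-a} |g(w)| \<le> e, the derivative f' g of S_g f is at most
  4^{a+1} e (1-|w|)^{-b-1}, while on a smaller disk it is bounded by a constant; for b > 0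
  integrating along radii bounds the H^\<infinity>_b norm of S_g f. Applied to the differences of a
  locally uniformly convergent subsequence (Montel), with e small and the inner disk handled by
  uniform convergence, this gives compactness when the weighted g vanishes at the boundary.

  Conversely, the functions f_p(z) = (1-|p|^2)^{s-a} / (2(1 - conj p z))^s with s > a lie in the
  unit ball of H^\<infinity>_a and tend to 0 locally uniformly as |p| \<rightarrow> 1, so every norm limit
  of a subsequence of S_g f_p vanishes, while Cauchy's estimate at p bounds the H^\<infinity>_b norm of
  S_g f_p from below by a multiple of (1-|p|^2)^{b-a} |g(p)|. For b = 0 the resulting condition
  says that g tends to 0 at the boundary, so g = 0 by the maximum modulus principle.
\<close>

lemma disk_weight_pos: "z \<in> ball 0 1 \<Longrightarrow> 0 < 1 - (cmod z)\<^sup>2"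
  by (simp add: abs_square_less_1)

lemma one_minus_square_le: "1 - r\<^sup>2 \<le> 2 * (1 - (r::real))"
  using zero_le_power2[of "1 - r"] by (simp add: power2_eq_square algebra_simps)

lemma Hinf_holomorphic: "f \<in> Hinf a \<Longrightarrow> f holomorphic_on ball 0 1"
  by (simp add: Hinf_def)

lemma Hinf_weighted_le_wnorm:
  assumes "f \<in> Hinf a" "z \<in> ball 0 1"
  shows "(1 - (cmod z)\<^sup>2) powr a * cmod (f z) \<le> wnorm a f"
  using assms unfolding Hinf_def wnorm_def
  by (auto intro!: cSUP_upper bounded_imp_bdd_above)

lemma wnorm_le:
  assumes "\<And>z. z \<in> ball 0 1 \<Longrightarrow> (1 - (cmod z)\<^sup>2) powr a * cmod (f z) \<le> M"
  shows "wnorm a f \<le> M"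
  unfolding wnorm_def using assms by (intro cSUP_least) auto

lemma HinfI:
  assumes "f holomorphic_on ball 0 1"
    and "\<And>z. z \<in> ball 0 1 \<Longrightarrow> (1 - (cmod z)\<^sup>2) powr a * cmod (f z) \<le> M"
  shows "f \<in> Hinf a"
  using assms unfolding Hinf_def bounded_iff by (intro CollectI conjI exI[of _ M]) auto

lemma weighted_bound_nonneg:
  assumes "\<And>w. w \<in> ball 0 1 \<Longrightarrow> (1 - (cmod w)\<^sup>2) powr b * cmod (\<phi> w) \<le> N"
  shows "0 \<le> N"
proof -
  have "cmod (\<phi> 0) \<le> N" using assms[of 0] by simp
  then show ?thesis using norm_ge_zero order_trans by blast
qed

lemma wnorm_nonneg: "f \<in> Hinf a \<Longrightarrow> 0 \<le> wnorm a f"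
  by (rule weighted_bound_nonneg[OF Hinf_weighted_le_wnorm])

lemma weighted_diff_le_wnorm:
  assumes f: "f \<in> Hinf a" and h: "h \<in> Hinf a" and z: "z \<in> ball 0 1"
  shows "(1 - (cmod z)\<^sup>2) powr a * cmod (f z - h z) \<le> wnorm a f + wnorm a h"
proof -
  have "(1 - (cmod z)\<^sup>2) powr a * cmod (f z - h z)
      \<le> (1 - (cmod z)\<^sup>2) powr a * cmod (f z) + (1 - (cmod z)\<^sup>2) powr a * cmod (h z)"
    by (simp add: distrib_left[symmetric] mult_left_mono norm_triangle_ineq4)
  then show ?thesis
    using Hinf_weighted_le_wnorm[OF f z] Hinf_weighted_le_wnorm[OF h z] by linarith
qed

lemma Hinf_diff:
  assumes f: "f \<in> Hinf a" and h: "h \<in> Hinf a"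
  shows "(\<lambda>z. f z - h z) \<in> Hinf a"
  using Hinf_holomorphic[OF f] Hinf_holomorphic[OF h] weighted_diff_le_wnorm[OF f h]
  by (intro HinfI holomorphic_intros)

lemma holomorphic_bounded_on_cball:
  assumes "f holomorphic_on ball 0 1" "0 \<le> \<rho>" "\<rho> < 1"
  obtains M where "0 \<le> M" "\<And>w. w \<in> cball 0 \<rho> \<Longrightarrow> cmod (f w) \<le> M"
proof -
  have "cball 0 \<rho> \<subseteq> ball (0::complex) 1" using assms by auto
  then have "compact (f ` cball 0 \<rho>)"
    using assms by (intro compact_continuous_image holomorphic_on_imp_continuous_on)
      (auto intro: holomorphic_on_subset)
  then obtain M where "\<forall>x\<in>f ` cball 0 \<rho>. norm x \<le> M"
    using compact_imp_bounded bounded_iff by metis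
  moreover from this have "0 \<le> M" using assms by (metis centre_in_cball image_eqI norm_ge_zero order_trans)
  ultimately show ?thesis using that by auto
qed

lemma deriv_bound_cball:
  assumes "f holomorphic_on ball 0 1" "cball w \<delta> \<subseteq> ball 0 1" "0 < \<delta>"
    and "\<And>x. x \<in> cball w \<delta> \<Longrightarrow> cmod (f x) \<le> M"
  shows "cmod (deriv f w) \<le> M / \<delta>"
proof -
  have "cmod ((deriv ^^ 1) f w) \<le> fact 1 * M / \<delta> ^ 1"
    using assms ball_subset_cball
    by (intro Cauchy_inequality holomorphic_on_subset[OF assms(1)] holomorphic_on_imp_continuous_on)
      (auto simp: dist_norm)
  then show ?thesis by simp
qed

lemma Sg_has_field_derivative:
  assumes f: "f holomorphic_on ball 0 1" and g: "g holomorphic_on ball 0 1" and z: "z \<in> ball 0 1"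
  shows "(Sg g f has_field_derivative deriv f z * g z) (at z)"
proof -
  have "(\<lambda>w. deriv f w * g w) holomorphic_on ball 0 1"
    using f g by (intro holomorphic_on_mult holomorphic_deriv) auto
  then obtain P where P: "\<And>x. x \<in> ball 0 1 \<Longrightarrow>
      (P has_field_derivative deriv f x * g x) (at x within ball 0 1)"
    using holomorphic_convex_primitive'[OF convex_ball open_ball] by blast
  have Sg_eq: "Sg g f w = P w - P 0" if "w \<in> ball 0 1" for w
  proof -
    have "path_image (linepath 0 w) \<subseteq> ball 0 1"
      using that by (simp add: closed_segment_subset convex_ball)
    from contour_integral_primitive[OF P valid_path_linepath this]
    show ?thesis unfolding Sg_def by (simp add: contour_integral_unique)
  qed
  have "(P has_field_derivative deriv f z * g z) (at z)"
    using P[OF z] at_within_open[OF z open_ball] by metis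
  then have "((\<lambda>w. P w - P 0) has_field_derivative deriv f z * g z) (at z)"
    by (auto intro!: derivative_eq_intros)
  then show ?thesis
    by (rule has_field_derivative_transform_within_open[OF _ open_ball z]) (simp add: Sg_eq)
qed

lemma Sg_holomorphic:
  "f holomorphic_on ball 0 1 \<Longrightarrow> g holomorphic_on ball 0 1 \<Longrightarrow> Sg g f holomorphic_on ball 0 1"
  using Sg_has_field_derivative holomorphic_on_open open_ball by blast

lemma deriv_Sg:
  "f holomorphic_on ball 0 1 \<Longrightarrow> g holomorphic_on ball 0 1 \<Longrightarrow> z \<in> ball 0 1 \<Longrightarrow>
    deriv (Sg g f) z = deriv f z * g z"
  by (rule DERIV_imp_deriv[OF Sg_has_field_derivative])

lemma Sg_at_0 [simp]: "Sg g f 0 = 0"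
  by (simp add: Sg_def)

lemma Sg_diff:
  assumes f: "f holomorphic_on ball 0 1" and h: "h holomorphic_on ball 0 1"
    and g: "g holomorphic_on ball 0 1" and z: "z \<in> ball 0 1"
  shows "Sg g (\<lambda>w. f w - h w) z = Sg g f z - Sg g h z"
proof -
  have sub: "path_image (linepath 0 z) \<subseteq> ball 0 1"
    using z by (simp add: closed_segment_subset convex_ball)
  have int: "(\<lambda>w. deriv k w * g w) contour_integrable_on linepath 0 z"
    if "k holomorphic_on ball 0 1" for k
    by (rule contour_integrable_holomorphic_simple[OF _ open_ball valid_path_linepath sub])
      (intro holomorphic_intros holomorphic_deriv that g open_ball)
  have "deriv (\<lambda>w. f w - h w) w * g w = deriv f w * g w - deriv h w * g w"
    if "w \<in> path_image (linepath 0 z)" for w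
  proof -
    have "w \<in> ball 0 1" using that sub by blast
    then have "deriv (\<lambda>w. f w - h w) w = deriv f w - deriv h w"
      by (intro deriv_diff holomorphic_on_imp_differentiable_at[OF f open_ball]
          holomorphic_on_imp_differentiable_at[OF h open_ball])
    then show ?thesis by (simp add: left_diff_distrib)
  qed
  then have "Sg g (\<lambda>w. f w - h w) z
      = contour_integral (linepath 0 z) (\<lambda>w. deriv f w * g w - deriv h w * g w)"
    unfolding Sg_def by (rule contour_integral_eq)
  also have "\<dots> = Sg g f z - Sg g h z"
    unfolding Sg_def by (rule contour_integral_diff[OF int[OF f] int[OF h]])
  finally show ?thesis .
qed

lemma Sg_norm_le:
  assumes f: "f holomorphic_on ball 0 1" and g: "g holomorphic_on ball 0 1" and z: "z \<in> ball 0 1"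
    and D: "\<And>w. w \<in> cball 0 (cmod z) \<Longrightarrow> cmod (deriv f w) \<le> D"
    and G: "\<And>w. w \<in> cball 0 (cmod z) \<Longrightarrow> cmod (g w) \<le> G"
  shows "cmod (Sg g f z) \<le> D * G * cmod z"
proof -
  have sub: "cball 0 (cmod z) \<subseteq> ball 0 1" using z by auto
  have "0 \<le> D" using order_trans[OF norm_ge_zero D[of 0]] by simp
  have "norm (Sg g f z - Sg g f 0) \<le> D * G * norm (z - 0)"
  proof (rule field_differentiable_bound[OF convex_cball, of _ _ _ "\<lambda>w. deriv f w * g w"])
    fix w :: complex assume w: "w \<in> cball 0 (cmod z)"
    then show "(Sg g f has_field_derivative deriv f w * g w) (at w within cball 0 (cmod z))"
      using sub by (blast intro: has_field_derivative_at_within Sg_has_field_derivative[OF f g])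
    show "norm (deriv f w * g w) \<le> D * G"
      unfolding norm_mult using D[OF w] G[OF w] \<open>0 \<le> D\<close> by (intro mult_mono) simp_all
  qed (simp_all add: dist_norm)
  then show ?thesis by simp
qed

text \<open>Cauchy's estimate on the disk of radius (1-|z|)/2 around z, on which the weight
  1-|w|^2 is at least a quarter of 1-|z|^2.\<close>
lemma weighted_deriv_bound:
  assumes hol: "\<phi> holomorphic_on ball 0 1" and b: "b \<ge> 0"
    and N: "\<And>w. w \<in> ball 0 1 \<Longrightarrow> (1 - (cmod w)\<^sup>2) powr b * cmod (\<phi> w) \<le> N"
    and z: "z \<in> ball 0 1"
  shows "(1 - (cmod z)\<^sup>2) powr (b + 1) * cmod (deriv \<phi> z) \<le> 4 powr (b + 1) * N"
proof -
  define u where "u = 1 - (cmod z)\<^sup>2"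
  define \<delta> where "\<delta> = (1 - cmod z) / 2"
  have u: "0 < u" using disk_weight_pos[OF z] by (simp add: u_def)
  have \<delta>: "0 < \<delta>" "u \<le> 4 * \<delta>"
    using z one_minus_square_le[of "cmod z"] by (auto simp: \<delta>_def u_def)
  have near: "cmod x \<le> (1 + cmod z) / 2" if "x \<in> cball z \<delta>" for x
    using that norm_triangle_ineq2[of x z] by (auto simp: dist_norm norm_minus_commute \<delta>_def)
  have sub: "cball z \<delta> \<subseteq> ball 0 1"
    using near z by (force simp: field_simps)
  have bound: "cmod (\<phi> x) \<le> 4 powr b * N / u powr b" if x: "x \<in> cball z \<delta>" for x
  proof -
    have xb: "x \<in> ball 0 1" using sub x by blast
    have "u / 4 \<le> 1 - cmod x" using near[OF x] \<delta> by (simp add: \<delta>_def)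
    also have "\<dots> \<le> 1 - (cmod x)\<^sup>2"
      using xb by (simp add: power2_eq_square mult_left_le_one_le)
    finally have "(u / 4) powr b \<le> (1 - (cmod x)\<^sup>2) powr b"
      using u b by (intro powr_mono2) auto
    then have "(u / 4) powr b * cmod (\<phi> x) \<le> N"
      using N[OF xb] by (meson mult_right_mono norm_ge_zero order_trans)
    then show ?thesis using u by (simp add: powr_divide field_simps)
  qed
  have "cmod (deriv \<phi> z) \<le> 4 powr b * N / u powr b / \<delta>"
    by (rule deriv_bound_cball[OF hol sub \<delta>(1) bound])
  then have "u powr (b + 1) * cmod (deriv \<phi> z) \<le> u * (4 powr b * N) / \<delta>"
    using u \<delta> by (simp add: powr_add field_simps)
  also have "\<dots> \<le> 4 * \<delta> * (4 powr b * N) / \<delta>"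
    using \<delta> weighted_bound_nonneg[OF N] by (intro divide_right_mono mult_right_mono) auto
  also have "\<dots> = 4 powr (b + 1) * N"
    using \<delta> by (simp add: powr_add)
  finally show ?thesis by (simp add: u_def)
qed

lemma Hinf_deriv_le_wnorm:
  assumes "\<phi> \<in> Hinf b" "b \<ge> 0" "z \<in> ball 0 1"
  shows "(1 - (cmod z)\<^sup>2) powr (b + 1) * cmod (deriv \<phi> z) \<le> 4 powr (b + 1) * wnorm b \<phi>"
  using assms Hinf_weighted_le_wnorm[OF assms(1)]
  by (intro weighted_deriv_bound[OF Hinf_holomorphic]) auto

text \<open>Integrate the derivative bound along the radius [0, z] and compare with the primitive
  \<open>\<psi>\<close> of the majorant.\<close>
lemma radial_growth_bound:
  assumes b: "b > 0" and hol: "\<phi> holomorphic_on ball 0 1" and \<phi>0: "\<phi> 0 = 0"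
    and bd: "\<And>w. w \<in> ball 0 1 \<Longrightarrow> cmod (deriv \<phi> w) \<le> A + B / (1 - cmod w) powr (b + 1)"
    and A: "A \<ge> 0" and B: "B \<ge> 0" and z: "z \<in> ball 0 1"
  shows "cmod (\<phi> z) \<le> A + B / b * (1 - cmod z) powr (- b)"
proof -
  define r where "r = cmod z"
  have r: "0 \<le> r" "r < 1" using z by (auto simp: r_def)
  define f where "f = (\<lambda>t::real. \<phi> (of_real t * z))"
  define f' where "f' = (\<lambda>t::real. deriv \<phi> (of_real t * z) * z)"
  define \<psi> where "\<psi> = (\<lambda>t::real. A * r * t + B / b * (1 - t * r) powr (- b))"
  define \<psi>' where "\<psi>' = (\<lambda>t::real. A * r + B * r * (1 - t * r) powr (- b - 1))"
  have tr: "t * r \<le> r" if "0 \<le> t" "t \<le> 1" for t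
    using that r by (simp add: mult_left_le_one_le)
  have tz: "of_real t * z \<in> ball 0 1" if "0 \<le> t" "t \<le> 1" for t
    using tr[OF that] that r by (simp add: norm_mult r_def)
  have fd: "(f has_vector_derivative f' t) (at t)" if "0 \<le> t" "t \<le> 1" for t
  proof -
    have "((\<lambda>w. \<phi> (w * z)) has_field_derivative deriv \<phi> (of_real t * z) * z) (at (of_real t))"
    proof -
      have "((\<lambda>w. w * z) has_field_derivative z) (at (of_real t))"
        by (auto intro!: derivative_eq_intros)
      from DERIV_chain2[OF holomorphic_derivI[OF hol open_ball tz[OF that]] this]
      show ?thesis by simp
    qed
    from has_vector_derivative_real_field[OF this] show ?thesis
      unfolding f_def f'_def by simp
  qed
  have \<psi>d: "(\<psi> has_vector_derivative \<psi>' t) (at t)" if "0 \<le> t" "t \<le> 1" for t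
  proof -
    have "(\<psi> has_real_derivative A * r + B / b * (- b * (1 - t * r) powr (- b - 1) * - r)) (at t)"
      unfolding \<psi>_def using tr[OF that] r
      by (auto intro!: derivative_eq_intros DERIV_fun_powr[where r = "- b", simplified])
    moreover have "A * r + B / b * (- b * (1 - t * r) powr (- b - 1) * - r) = \<psi>' t"
      using b by (simp add: \<psi>'_def)
    ultimately show ?thesis
      by (simp add: has_real_derivative_iff_has_vector_derivative)
  qed
  have f_cont: "continuous_on {0..1} f" and \<psi>_cont: "continuous_on {0..1} \<psi>"
    using fd \<psi>d by (auto intro!: continuous_at_imp_continuous_on has_vector_derivative_continuous)
  have bnd: "norm (f' t) \<le> \<psi>' t" if "0 < t" "t < 1" for t
  proof -
    have "norm (f' t) = cmod (deriv \<phi> (of_real t * z)) * r" by (simp add: f'_def norm_mult r_def)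
    also have "\<dots> \<le> (A + B / (1 - t * r) powr (b + 1)) * r"
      using bd[OF tz] that r by (intro mult_right_mono) (auto simp: norm_mult r_def)
    also have "\<dots> = \<psi>' t"
    proof -
      have "- b - 1 = - (b + 1)" by simp
      then show ?thesis
        unfolding \<psi>'_def by (simp only: powr_minus) (simp add: algebra_simps divide_inverse)
    qed
    finally show ?thesis .
  qed
  have "norm (f 1 - f 0) \<le> \<psi> 1 - \<psi> 0"
    by (rule differentiable_bound_general[OF zero_less_one f_cont \<psi>_cont, of f' \<psi>'])
      (use fd \<psi>d bnd in auto)
  then have "cmod (\<phi> z) \<le> A * r + B / b * (1 - r) powr (- b) - B / b"
    using \<phi>0 by (simp add: f_def \<psi>_def)
  also have "\<dots> \<le> A + B / b * (1 - r) powr (- b)"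
    using r A mult_left_le[of r A] divide_nonneg_pos[OF B b] by linarith
  finally show ?thesis by (simp add: r_def)
qed

lemma weighted_growth_bound:
  assumes b: "b > 0" and hol: "\<phi> holomorphic_on ball 0 1" and \<phi>0: "\<phi> 0 = 0"
    and bd: "\<And>w. w \<in> ball 0 1 \<Longrightarrow> cmod (deriv \<phi> w) \<le> A + B / (1 - cmod w) powr (b + 1)"
    and A: "A \<ge> 0" and B: "B \<ge> 0" and z: "z \<in> ball 0 1"
  shows "(1 - (cmod z)\<^sup>2) powr b * cmod (\<phi> z) \<le> A + B * 2 powr b / b"
proof -
  define r where "r = cmod z"
  have r: "0 \<le> r" "r < 1" using z by (auto simp: r_def)
  have u: "0 < 1 - r\<^sup>2" "1 - r\<^sup>2 \<le> 1" using disk_weight_pos[OF z] by (auto simp: r_def)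
  have "(1 - r\<^sup>2) powr b * (1 - r) powr (- b) = (1 + r) powr b"
    using r by (simp add: power2_eq_square powr_minus powr_mult[symmetric] field_simps
        flip: square_diff_one_factored)
  also have "\<dots> \<le> 2 powr b" using r b by (intro powr_mono2) auto
  finally have w: "(1 - r\<^sup>2) powr b * (1 - r) powr (- b) \<le> 2 powr b" .
  have "(1 - r\<^sup>2) powr b * cmod (\<phi> z) \<le> (1 - r\<^sup>2) powr b * (A + B / b * (1 - r) powr (- b))"
    using radial_growth_bound[OF assms] by (intro mult_left_mono) (auto simp: r_def)
  also have "\<dots> = (1 - r\<^sup>2) powr b * A + B / b * ((1 - r\<^sup>2) powr b * (1 - r) powr (- b))"
    by (simp add: algebra_simps)
  also have "\<dots> \<le> 1 * A + B / b * 2 powr b"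
    using w u A B b by (intro add_mono mult_right_mono mult_left_mono powr_le1) auto
  finally show ?thesis by (simp add: r_def)
qed

definition vanishes_at_circle :: "(complex \<Rightarrow> real) \<Rightarrow> bool" where
  "vanishes_at_circle u \<longleftrightarrow> (\<forall>\<epsilon>>0. \<exists>r<1. \<forall>z. r < cmod z \<and> cmod z < 1 \<longrightarrow> u z < \<epsilon>)"

lemma vanishes_at_circleE:
  assumes "vanishes_at_circle u" "\<epsilon> > 0"
  obtains \<rho> where "0 \<le> \<rho>" "\<rho> < 1" "\<And>z. \<rho> < cmod z \<Longrightarrow> cmod z < 1 \<Longrightarrow> u z < \<epsilon>"
proof -
  obtain r where "r < 1" "\<forall>z. r < cmod z \<and> cmod z < 1 \<longrightarrow> u z < \<epsilon>"
    using assms unfolding vanishes_at_circle_def by blast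
  then show ?thesis using that[of "max r 0"] by auto
qed

text \<open>The derivative k' g of S_g k is controlled by Cauchy's estimate on the disk |w| \<le> \<rho>
  and by the weighted estimate of k' together with the smallness of g outside it.\<close>
lemma Sg_weighted_estimate:
  assumes g: "g holomorphic_on ball 0 1" and k: "k holomorphic_on ball 0 1"
    and a: "a \<ge> 0" and b: "b > 0" and \<rho>: "0 \<le> \<rho>" "\<rho> < 1"
    and N: "\<And>w. w \<in> ball 0 1 \<Longrightarrow> (1 - (cmod w)\<^sup>2) powr a * cmod (k w) \<le> N"
    and M: "\<And>x. x \<in> cball 0 ((1 + \<rho>) / 2) \<Longrightarrow> cmod (k x) \<le> M"
    and G: "\<And>w. w \<in> cball 0 \<rho> \<Longrightarrow> cmod (g w) \<le> G"
    and e: "\<And>w. \<rho> < cmod w \<Longrightarrow> cmod w < 1 \<Longrightarrow> (1 - (cmod w)\<^sup>2) powr (b - a) * cmod (g w) \<le> e"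
    and e0: "e \<ge> 0" and z: "z \<in> ball 0 1"
  shows "(1 - (cmod z)\<^sup>2) powr b * cmod (Sg g k z)
           \<le> 2 * M * G / (1 - \<rho>) + 4 powr (a + 1) * N * e * 2 powr b / b"
proof -
  define A where "A = 2 * M * G / (1 - \<rho>)"
  define B where "B = 4 powr (a + 1) * N * e"
  have M0: "0 \<le> M" and G0: "0 \<le> G"
    using order_trans[OF norm_ge_zero M[of 0]] order_trans[OF norm_ge_zero G[of 0]] \<rho> by auto
  then have A0: "0 \<le> A" and B0: "0 \<le> B"
    using \<rho> e0 weighted_bound_nonneg[OF N] by (auto simp: A_def B_def)
  have "cmod (deriv (Sg g k) w) \<le> A + B / (1 - cmod w) powr (b + 1)" if w: "w \<in> ball 0 1" for w
  proof (cases "cmod w \<le> \<rho>")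
    case True
    have sub: "cball w ((1 - \<rho>) / 2) \<subseteq> cball 0 ((1 + \<rho>) / 2)"
    proof
      fix x assume "x \<in> cball w ((1 - \<rho>) / 2)"
      then have "cmod (w - x) \<le> (1 - \<rho>) / 2" by (simp add: dist_norm)
      then have "cmod x \<le> (1 + \<rho>) / 2"
        using norm_triangle_sub[of x w] norm_minus_commute[of x w] True by argo
      then show "x \<in> cball 0 ((1 + \<rho>) / 2)" by simp
    qed
    also have "\<dots> \<subseteq> ball 0 1" using \<rho> by auto
    finally have "cmod (deriv k w) \<le> M / ((1 - \<rho>) / 2)"
      using sub \<rho> by (intro deriv_bound_cball[OF k] M) auto
    then have "cmod (deriv k w) * cmod (g w) \<le> 2 * M / (1 - \<rho>) * G"
      using G[of w] True M0 \<rho> by (intro mult_mono) (auto simp: mult.commute)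
    then have "cmod (deriv (Sg g k) w) \<le> A"
      by (simp add: deriv_Sg[OF k g w] norm_mult A_def)
    then show ?thesis
      using B0 b by (simp add: add_increasing2)
  next
    case False
    define u where "u = 1 - (cmod w)\<^sup>2"
    have u: "0 < u" "0 < 1 - cmod w" "1 - cmod w \<le> u"
      using disk_weight_pos[OF w] w by (auto simp: u_def power2_eq_square mult_left_le_one_le)
    have k': "u powr (a + 1) * cmod (deriv k w) \<le> 4 powr (a + 1) * N"
      unfolding u_def by (rule weighted_deriv_bound[OF k a N w])
    have g': "u powr (b - a) * cmod (g w) \<le> e"
      using e False w by (simp add: u_def)
    have "(u powr (a + 1) * cmod (deriv k w)) * (u powr (b - a) * cmod (g w)) \<le> B"
      unfolding B_def by (rule mult_mono[OF k' g']) (use weighted_bound_nonneg[OF N] in auto)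
    then have "u powr (b + 1) * cmod (deriv (Sg g k) w) \<le> B"
      by (simp add: deriv_Sg[OF k g w] norm_mult powr_add[symmetric] mult_ac)
    then have "cmod (deriv (Sg g k) w) \<le> B / u powr (b + 1)"
      using u by (simp add: field_simps)
    also have "\<dots> \<le> B / (1 - cmod w) powr (b + 1)"
      using u b B0 by (intro divide_left_mono powr_mono2) auto
    finally show ?thesis
      using A0 by linarith
  qed
  from weighted_growth_bound[OF b Sg_holomorphic[OF k g] Sg_at_0 this A0 B0 z]
  show ?thesis by (simp add: A_def B_def)
qed

lemma Sg_into_Hinf:
  assumes g: "g holomorphic_on ball 0 1" and a: "a \<ge> 0" and b: "b > 0"
    and van: "vanishes_at_circle (\<lambda>z. (1 - (cmod z)\<^sup>2) powr (b - a) * cmod (g z))"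
    and f: "f \<in> Hinf a"
  shows "Sg g f \<in> Hinf b"
proof -
  have fh: "f holomorphic_on ball 0 1" using f by (rule Hinf_holomorphic)
  obtain \<rho> where \<rho>: "0 \<le> \<rho>" "\<rho> < 1"
    and e: "\<And>w. \<rho> < cmod w \<Longrightarrow> cmod w < 1 \<Longrightarrow> (1 - (cmod w)\<^sup>2) powr (b - a) * cmod (g w) < 1"
    using vanishes_at_circleE[OF van zero_less_one] by blast
  obtain M where "\<And>x. x \<in> cball 0 ((1 + \<rho>) / 2) \<Longrightarrow> cmod (f x) \<le> M"
    using holomorphic_bounded_on_cball[OF fh, of "(1 + \<rho>) / 2"] \<rho> by auto
  moreover obtain G where "\<And>w. w \<in> cball 0 \<rho> \<Longrightarrow> cmod (g w) \<le> G"
    using holomorphic_bounded_on_cball[OF g \<rho>] by auto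
  ultimately have "(1 - (cmod z)\<^sup>2) powr b * cmod (Sg g f z)
      \<le> 2 * M * G / (1 - \<rho>) + 4 powr (a + 1) * wnorm a f * 1 * 2 powr b / b"
    if "z \<in> ball 0 1" for z
    using e Hinf_weighted_le_wnorm[OF f] that
    by (intro Sg_weighted_estimate[OF g fh a b \<rho>]) (auto intro: less_imp_le)
  then show ?thesis by (rule HinfI[OF Sg_holomorphic[OF fh g]])
qed

lemma compact_subset_disk_in_cball:
  assumes "compact K" "K \<subseteq> ball (0::complex) 1"
  obtains \<rho> where "\<rho> < 1" "K \<subseteq> cball 0 \<rho>"
proof (cases "K = {}")
  case False
  obtain x where x: "x \<in> K" "\<forall>y\<in>K. norm y \<le> norm x"
    using continuous_attains_sup[OF assms(1) False continuous_on_norm_id] by blast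
  show ?thesis
  proof (rule that)
    show "norm x < 1" using x(1) assms(2) by auto
    show "K \<subseteq> cball 0 (norm x)" using x(2) by auto
  qed
qed (use that[of 0] in auto)

lemma Hinf_unit_ball_subseq:
  fixes F :: "nat \<Rightarrow> complex \<Rightarrow> complex"
  assumes a: "a \<ge> 0" and F: "\<And>n. F n \<in> Hinf a" "\<And>n. wnorm a (F n) \<le> 1"
  obtains r h where "strict_mono r" "h \<in> Hinf a" "wnorm a h \<le> 1"
    "\<And>K. compact K \<Longrightarrow> K \<subseteq> ball 0 1 \<Longrightarrow> uniform_limit K (F \<circ> r) h sequentially"
proof -
  have F_le: "cmod (F n z) \<le> 1 / (1 - (cmod z)\<^sup>2) powr a" if "z \<in> ball 0 1" for n z
    using order_trans[OF Hinf_weighted_le_wnorm[OF F(1) that] F(2), of n] disk_weight_pos[OF that]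
    by (simp add: field_simps)
  obtain h r where h: "h holomorphic_on ball 0 1" and r: "strict_mono r"
    and pt: "\<And>x. x \<in> ball 0 1 \<Longrightarrow> (\<lambda>n. F (r n) x) \<longlonglongrightarrow> h x"
    and un: "\<And>K. compact K \<Longrightarrow> K \<subseteq> ball 0 1 \<Longrightarrow> uniform_limit K (F \<circ> r) h sequentially"
  proof (rule Montel[OF open_ball, where \<H>="range F" and \<F>=F])
    fix K :: "complex set" assume K: "compact K" "K \<subseteq> ball 0 1"
    then obtain \<rho> where \<rho>: "\<rho> < 1" "K \<subseteq> cball 0 \<rho>"
      by (rule compact_subset_disk_in_cball)
    have "cmod (F n z) \<le> 1 / (1 - \<rho>\<^sup>2) powr a" if "z \<in> K" for n z
    proof -
      have z\<rho>: "cmod z \<le> \<rho>" using that \<rho> by auto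
      then have "(cmod z)\<^sup>2 \<le> \<rho>\<^sup>2" by (intro power_mono) auto
      moreover have "0 < 1 - \<rho>\<^sup>2"
        using z\<rho> \<rho> order_trans[OF norm_ge_zero z\<rho>] by (simp add: abs_square_less_1)
      ultimately have "1 / (1 - (cmod z)\<^sup>2) powr a \<le> 1 / (1 - \<rho>\<^sup>2) powr a"
        using a by (intro divide_left_mono powr_mono2 mult_pos_pos) auto
      then show ?thesis using F_le[of z n] that K by auto
    qed
    then show "\<exists>B. \<forall>f\<in>range F. \<forall>z\<in>K. cmod (f z) \<le> B" by blast
  qed (use Hinf_holomorphic[OF F(1)] in auto)
  have "(1 - (cmod z)\<^sup>2) powr a * cmod (h z) \<le> 1" if "z \<in> ball 0 1" for z
  proof (rule LIMSEQ_le_const2)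
    show "(\<lambda>n. (1 - (cmod z)\<^sup>2) powr a * cmod (F (r n) z)) \<longlonglongrightarrow> (1 - (cmod z)\<^sup>2) powr a * cmod (h z)"
      by (intro tendsto_intros pt that)
    show "\<exists>N. \<forall>n\<ge>N. (1 - (cmod z)\<^sup>2) powr a * cmod (F (r n) z) \<le> 1"
      using order_trans[OF Hinf_weighted_le_wnorm[OF F(1) that] F(2)] by blast
  qed
  then show ?thesis
    using that[OF r HinfI[OF h] wnorm_le un] by blast
qed

lemma wnorm_Sg_diff_le:
  assumes g: "g holomorphic_on ball 0 1" and a: "a \<ge> 0" and b: "b > 0" and \<rho>: "0 \<le> \<rho>" "\<rho> < 1"
    and f: "f \<in> Hinf a" "wnorm a f \<le> 1" and h: "h \<in> Hinf a" "wnorm a h \<le> 1"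
    and M: "\<And>x. x \<in> cball 0 ((1 + \<rho>) / 2) \<Longrightarrow> cmod (f x - h x) \<le> M"
    and G: "\<And>w. w \<in> cball 0 \<rho> \<Longrightarrow> cmod (g w) \<le> G"
    and e: "\<And>w. \<rho> < cmod w \<Longrightarrow> cmod w < 1 \<Longrightarrow> (1 - (cmod w)\<^sup>2) powr (b - a) * cmod (g w) \<le> e"
    and e0: "e \<ge> 0"
  shows "wnorm b (\<lambda>z. Sg g f z - Sg g h z) \<le> 2 * M * G / (1 - \<rho>) + 4 powr (a + 1) * 2 * e * 2 powr b / b"
proof (rule wnorm_le)
  fix z :: complex assume z: "z \<in> ball 0 1"
  have fh: "f holomorphic_on ball 0 1" "h holomorphic_on ball 0 1"
    using Hinf_holomorphic f(1) h(1) by blast+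
  have "(1 - (cmod w)\<^sup>2) powr a * cmod (f w - h w) \<le> 2" if "w \<in> ball 0 1" for w
    using weighted_diff_le_wnorm[OF f(1) h(1) that] f(2) h(2) by linarith
  with fh have "(1 - (cmod z)\<^sup>2) powr b * cmod (Sg g (\<lambda>w. f w - h w) z)
      \<le> 2 * M * G / (1 - \<rho>) + 4 powr (a + 1) * 2 * e * 2 powr b / b"
    by (intro Sg_weighted_estimate[OF g _ a b \<rho> _ M G e e0 z] holomorphic_intros)
  then show "(1 - (cmod z)\<^sup>2) powr b * cmod (Sg g f z - Sg g h z)
      \<le> 2 * M * G / (1 - \<rho>) + 4 powr (a + 1) * 2 * e * 2 powr b / b"
    by (simp add: Sg_diff[OF fh g z])
qed

lemma Sg_tendsto_of_uniform_limit:
  fixes F :: "nat \<Rightarrow> complex \<Rightarrow> complex"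
  assumes g: "g holomorphic_on ball 0 1" and a: "a \<ge> 0" and b: "b > 0"
    and van: "vanishes_at_circle (\<lambda>z. (1 - (cmod z)\<^sup>2) powr (b - a) * cmod (g z))"
    and F: "\<And>n. F n \<in> Hinf a" "\<And>n. wnorm a (F n) \<le> 1"
    and h: "h \<in> Hinf a" "wnorm a h \<le> 1"
    and lim: "\<And>K. compact K \<Longrightarrow> K \<subseteq> ball 0 1 \<Longrightarrow> uniform_limit K F h sequentially"
  shows "(\<lambda>n. wnorm b (\<lambda>z. Sg g (F n) z - Sg g h z)) \<longlonglongrightarrow> 0"
proof (rule LIMSEQ_I)
  fix \<epsilon> :: real assume \<epsilon>: "\<epsilon> > 0"
  define e where "e = \<epsilon> * b / (8 * 4 powr (a + 1) * 2 powr b)"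
  have e: "e > 0" using \<epsilon> b by (simp add: e_def)
  obtain \<rho> where \<rho>: "0 \<le> \<rho>" "\<rho> < 1"
    and g_out: "\<And>w. \<rho> < cmod w \<Longrightarrow> cmod w < 1 \<Longrightarrow> (1 - (cmod w)\<^sup>2) powr (b - a) * cmod (g w) < e"
    using vanishes_at_circleE[OF van e] by blast
  obtain G where G: "0 \<le> G" "\<And>w. w \<in> cball 0 \<rho> \<Longrightarrow> cmod (g w) \<le> G"
    using holomorphic_bounded_on_cball[OF g \<rho>] by blast
  define M where "M = \<epsilon> * (1 - \<rho>) / (8 * (G + 1))"
  have "M > 0" using \<epsilon> \<rho> G by (simp add: M_def)
  moreover have "cball 0 ((1 + \<rho>) / 2) \<subseteq> ball (0::complex) 1" using \<rho> by auto
  ultimately obtain n0 where n0: "\<And>n x. n \<ge> n0 \<Longrightarrow> x \<in> cball 0 ((1 + \<rho>) / 2) \<Longrightarrow>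
      dist (F n x) (h x) < M"
    using lim[OF compact_cball] unfolding uniform_limit_iff eventually_sequentially by meson
  have "2 * M * G / (1 - \<rho>) = \<epsilon> / 4 * (G / (G + 1))"
    using \<rho> G unfolding M_def by (simp add: divide_simps)
  also have "\<dots> \<le> \<epsilon> / 4" using \<epsilon> G by (intro mult_left_le) auto
  moreover have "4 powr (a + 1) * 2 * e * 2 powr b / b = \<epsilon> / 4"
    using b by (simp add: e_def field_simps)
  ultimately have total: "2 * M * G / (1 - \<rho>) + 4 powr (a + 1) * 2 * e * 2 powr b / b < \<epsilon>"
    using \<epsilon> by argo
  have "norm (wnorm b (\<lambda>z. Sg g (F n) z - Sg g h z) - 0) < \<epsilon>" if "n \<ge> n0" for n
  proof -
    have "wnorm b (\<lambda>z. Sg g (F n) z - Sg g h z) \<le> 2 * M * G / (1 - \<rho>) + 4 powr (a + 1) * 2 * e * 2 powr b / b"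
      using n0[OF that] g_out e G(2)
      by (intro wnorm_Sg_diff_le[OF g a b \<rho> F(1,2) h]) (auto simp: dist_norm intro: less_imp_le)
    moreover have "0 \<le> wnorm b (\<lambda>z. Sg g (F n) z - Sg g h z)"
      by (intro wnorm_nonneg Hinf_diff Sg_into_Hinf[OF g a b van] F(1) h(1))
    ultimately show ?thesis using total by simp
  qed
  then show "\<exists>no. \<forall>n\<ge>no. norm (wnorm b (\<lambda>z. Sg g (F n) z - Sg g h z) - 0) < \<epsilon>"
    by blast
qed

lemma compact_Sg_if_vanishing:
  assumes g: "g holomorphic_on ball 0 1" and a: "a \<ge> 0" and b: "b > 0"
    and van: "vanishes_at_circle (\<lambda>z. (1 - (cmod z)\<^sup>2) powr (b - a) * cmod (g z))"
  shows "compact_Sg a b g"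
  unfolding compact_Sg_def
proof (intro conjI ballI allI impI)
  show "Sg g f \<in> Hinf b" if "f \<in> Hinf a" for f
    using Sg_into_Hinf[OF g a b van that] .
  fix F :: "nat \<Rightarrow> complex \<Rightarrow> complex" assume "\<forall>n. F n \<in> Hinf a \<and> wnorm a (F n) \<le> 1"
  then obtain r h where r: "strict_mono r" and h: "h \<in> Hinf a" "wnorm a h \<le> 1"
    and lim: "\<And>K. compact K \<Longrightarrow> K \<subseteq> ball 0 1 \<Longrightarrow> uniform_limit K (F \<circ> r) h sequentially"
    using Hinf_unit_ball_subseq[OF a] by metis
  then show "\<exists>r h. strict_mono r \<and> h \<in> Hinf b \<and> (\<lambda>n. wnorm b (\<lambda>z. Sg g (F (r n)) z - h z)) \<longlonglongrightarrow> 0"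
    using \<open>\<forall>n. _\<close> Sg_into_Hinf[OF g a b van h(1)]
      Sg_tendsto_of_uniform_limit[OF g a b van, of "F \<circ> r" h]
    by (intro exI[of _ r] exI[of _ "Sg g h"]) auto
qed

lemma norm_one_minus_cnj_mult_ge: "1 - cmod p * cmod z \<le> cmod (1 - cnj p * z)"
  using norm_triangle_ineq2[of 1 "cnj p * z"] by (simp add: norm_mult)

lemma one_minus_cnj_mult_nonzero:
  assumes "cmod p < 1" "cmod z < 1"
  shows "1 - cnj p * z \<noteq> 0"
proof -
  have "cmod p * cmod z \<le> cmod p" using assms by (simp add: mult_left_le)
  then have "cmod p * cmod z < 1" using assms by linarith
  then show ?thesis using norm_one_minus_cnj_mult_ge[of p z] by auto
qed

definition test_coeff :: "nat \<Rightarrow> real \<Rightarrow> complex \<Rightarrow> real" where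
  "test_coeff s a p = (1 - (cmod p)\<^sup>2) powr (real s - a) / 2 ^ s"

definition test_fun :: "nat \<Rightarrow> real \<Rightarrow> complex \<Rightarrow> complex \<Rightarrow> complex" where
  "test_fun s a p z = of_real (test_coeff s a p) / (1 - cnj p * z) ^ s"

lemma test_fun_has_field_derivative:
  assumes "cmod p < 1" "cmod z < 1"
  shows "(test_fun s a p has_field_derivative
           of_real (test_coeff s a p) * of_nat s * cnj p / (1 - cnj p * z) ^ (s + 1)) (at z)"
proof (cases s)
  case 0
  then show ?thesis by (simp add: test_fun_def[abs_def])
next
  case (Suc m)
  have nz: "1 - cnj p * z \<noteq> 0" by (rule one_minus_cnj_mult_nonzero[OF assms])
  show ?thesis
    unfolding test_fun_def[abs_def] Suc by (rule derivative_eq_intros refl | use nz in simp)+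
qed

lemma test_fun_holomorphic: "cmod p < 1 \<Longrightarrow> test_fun s a p holomorphic_on ball 0 1"
  using test_fun_has_field_derivative holomorphic_on_open[OF open_ball] by fastforce

lemma deriv_test_fun:
  "cmod p < 1 \<Longrightarrow> cmod z < 1 \<Longrightarrow>
    deriv (test_fun s a p) z = of_real (test_coeff s a p) * of_nat s * cnj p / (1 - cnj p * z) ^ (s + 1)"
  by (rule DERIV_imp_deriv[OF test_fun_has_field_derivative])

text \<open>Both weights are at most 2|1 - conj p z|, and their exponents add up to s.\<close>
lemma test_fun_weighted_le_one:
  assumes p: "cmod p < 1" and z: "cmod z < 1" and a: "0 \<le> a" "a \<le> real s"
  shows "(1 - (cmod z)\<^sup>2) powr a * cmod (test_fun s a p z) \<le> 1"
proof -
  define D where "D = cmod (1 - cnj p * z)"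
  have D: "0 < D" using one_minus_cnj_mult_nonzero[OF p z] by (simp add: D_def)
  have "cmod p * cmod z \<le> cmod z" "cmod p * cmod z \<le> cmod p"
    using p z by (simp_all add: mult_left_le_one_le mult_right_le_one_le)
  then have "1 - cmod z \<le> D" "1 - cmod p \<le> D"
    using norm_one_minus_cnj_mult_ge[of p z] by (simp_all add: D_def)
  then have wz: "1 - (cmod z)\<^sup>2 \<le> 2 * D" and wp: "1 - (cmod p)\<^sup>2 \<le> 2 * D"
    using one_minus_square_le[of "cmod z"] one_minus_square_le[of "cmod p"] by auto
  have "(1 - (cmod z)\<^sup>2) powr a * (1 - (cmod p)\<^sup>2) powr (real s - a)
        \<le> (2 * D) powr a * (2 * D) powr (real s - a)"
    using wz wp z p a by (intro mult_mono powr_mono2) (auto simp: abs_square_less_1 less_imp_le)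
  also have "\<dots> = 2 ^ s * D ^ s"
    using D by (simp add: powr_add[symmetric] powr_realpow power_mult_distrib)
  moreover have "cmod (test_fun s a p z) = (1 - (cmod p)\<^sup>2) powr (real s - a) / (2 ^ s * D ^ s)"
    by (simp add: test_fun_def test_coeff_def D_def norm_divide norm_power norm_mult)
  ultimately show ?thesis
    using D by (simp add: pos_divide_le_eq)
qed

lemma test_fun_Hinf:
  assumes "cmod p < 1" "0 \<le> a" "a \<le> real s"
  shows "test_fun s a p \<in> Hinf a" "wnorm a (test_fun s a p) \<le> 1"
  using test_fun_weighted_le_one[OF assms(1) _ assms(2,3)]
  by (auto intro!: HinfI[OF test_fun_holomorphic[OF assms(1)], where M = 1] wnorm_le)

lemma test_coeff_tendsto_zero:
  assumes "\<And>n. cmod (p n) < 1" "(\<lambda>n. cmod (p n)) \<longlonglongrightarrow> 1" "a < real s"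
  shows "(\<lambda>n. test_coeff s a (p n)) \<longlonglongrightarrow> 0"
proof -
  have "(\<lambda>n. 1 - (cmod (p n))\<^sup>2) \<longlonglongrightarrow> 1 - 1\<^sup>2"
    by (intro tendsto_intros assms(2))
  moreover have "\<forall>n. 0 \<le> 1 - (cmod (p n))\<^sup>2"
    using assms(1) by (simp add: abs_square_less_1 less_imp_le)
  ultimately have "(\<lambda>n. (1 - (cmod (p n))\<^sup>2) powr (real s - a)) \<longlonglongrightarrow> 0"
    using assms(3) by (intro tendsto_zero_powrI always_eventually) auto
  then show ?thesis
    unfolding test_coeff_def by (rule tendsto_divide_zero)
qed

lemma test_fun_deriv_at_center:
  assumes p: "cmod p < 1"
  shows "(1 - (cmod p)\<^sup>2) powr (a + 1) * cmod (deriv (test_fun s a p) p)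
           = real s * cmod p / 2 ^ s"
proof -
  define u where "u = 1 - (cmod p)\<^sup>2"
  have u: "0 < u" using p by (simp add: u_def abs_square_less_1)
  have e: "1 - cnj p * p = of_real u"
    using complex_norm_square[of p] by (simp add: u_def mult.commute)
  have "cmod (deriv (test_fun s a p) p)
      = cmod (of_real (test_coeff s a p) * of_nat s * cnj p / of_real u ^ (s + 1))"
    by (simp only: deriv_test_fun[OF p p] e)
  also have "\<dots> = u powr (real s - a) * (real s * cmod p / 2 ^ s) / u ^ (s + 1)"
    using u by (simp add: test_coeff_def norm_mult norm_divide norm_power flip: u_def)
  finally have "u powr (a + 1) * cmod (deriv (test_fun s a p) p)
      = u powr (a + 1) * u powr (real s - a) * (real s * cmod p / 2 ^ s) / u ^ (s + 1)"
    by simp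
  also have "u powr (a + 1) * u powr (real s - a) = u powr real (s + 1)"
    by (simp add: powr_add[symmetric])
  also have "\<dots> = u ^ (s + 1)"
    using u by (rule powr_realpow)
  finally show ?thesis using u by (simp add: u_def)
qed

lemma test_fun_deriv_bound:
  assumes p: "cmod p < 1" and w: "cmod w \<le> R" and R: "R < 1"
  shows "cmod (deriv (test_fun s a p) w) \<le> test_coeff s a p * real s / (1 - R) ^ (s + 1)"
proof -
  have "cmod p * cmod w \<le> R"
    using p w mult_left_le_one_le[of "cmod w" "cmod p"] by simp
  then have le: "1 - R \<le> cmod (1 - cnj p * w)" using norm_one_minus_cnj_mult_ge[of p w] by simp
  have "cmod (deriv (test_fun s a p) w)
      = test_coeff s a p * real s * cmod p / cmod (1 - cnj p * w) ^ (s + 1)"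
    using deriv_test_fun[OF p, of w] w R
    by (simp add: norm_mult norm_divide norm_power test_coeff_def del: of_nat_Suc)
  also have "\<dots> \<le> test_coeff s a p * real s / (1 - R) ^ (s + 1)"
    using p le R by (intro frac_le mult_right_le_one_le zero_less_power power_mono)
      (auto simp: test_coeff_def)
  finally show ?thesis .
qed

lemma Sg_test_fun_tendsto_zero:
  assumes g: "g holomorphic_on ball 0 1" and z: "z \<in> ball 0 1"
    and p: "\<And>n. cmod (p n) < 1" and lim: "(\<lambda>n. test_coeff s a (p n)) \<longlonglongrightarrow> 0"
  shows "(\<lambda>n. Sg g (test_fun s a (p n)) z) \<longlonglongrightarrow> 0"
proof -
  define R where "R = cmod z"
  have R: "0 \<le> R" "R < 1" using z by (auto simp: R_def)
  obtain G where G: "\<And>w. w \<in> cball 0 R \<Longrightarrow> cmod (g w) \<le> G"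
    using holomorphic_bounded_on_cball[OF g R] by blast
  define K where "K = real s / (1 - R) ^ (s + 1) * G * R"
  have bound: "norm (Sg g (test_fun s a (p n)) z) \<le> K * test_coeff s a (p n)" for n
    using Sg_norm_le[OF test_fun_holomorphic[OF p] g z,
        where D = "test_coeff s a (p n) * real s / (1 - R) ^ (s + 1)" and G = G]
      test_fun_deriv_bound[OF p _ R(2)] G
    by (simp add: R_def K_def mult_ac)
  have "(\<lambda>n. K * test_coeff s a (p n)) \<longlonglongrightarrow> 0"
    using tendsto_mult_right_zero[OF lim] by simp
  then show ?thesis
    by (rule Lim_null_comparison[OF always_eventually[OF allI[OF bound]]])
qed

lemma not_vanishes_at_circleE:
  assumes "\<not> vanishes_at_circle u"
  obtains \<epsilon> p where "\<epsilon> > 0" "\<And>n. 1 / 2 \<le> cmod (p n)" "\<And>n. cmod (p n) < 1"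
    "(\<lambda>n. cmod (p n)) \<longlonglongrightarrow> 1" "\<And>n. \<epsilon> \<le> u (p n)"
proof -
  define r :: "nat \<Rightarrow> real" where "r n = 1 - inverse (real (Suc n)) / 2" for n
  obtain \<epsilon> where \<epsilon>: "\<epsilon> > 0"
    and bad: "\<forall>r<1. \<exists>z. r < cmod z \<and> cmod z < 1 \<and> \<not> u z < \<epsilon>"
    using assms unfolding vanishes_at_circle_def by blast
  have "\<exists>z. r n < cmod z \<and> cmod z < 1 \<and> \<epsilon> \<le> u z" for n
  proof -
    have "r n < 1" by (simp add: r_def)
    then show ?thesis using bad by (meson not_less)
  qed
  then obtain p where p: "\<And>n. r n < cmod (p n)" "\<And>n. cmod (p n) < 1" "\<And>n. \<epsilon> \<le> u (p n)"
    by metis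
  have "1 / 2 \<le> r n" for n
    using le_imp_inverse_le[of 1 "real (Suc n)"] by (simp add: r_def)
  then have "1 / 2 \<le> cmod (p n)" for n
    using less_imp_le[OF p(1)] order_trans by blast
  moreover have "(\<lambda>n. cmod (p n)) \<longlonglongrightarrow> 1"
  proof (rule tendsto_sandwich[where f = r and h = "\<lambda>_. 1"])
    show "\<forall>\<^sub>F n in sequentially. r n \<le> cmod (p n)" using p(1) by (simp add: less_imp_le)
    show "\<forall>\<^sub>F n in sequentially. cmod (p n) \<le> 1" using p(2) by (simp add: less_imp_le)
    have "r \<longlonglongrightarrow> 1 - 0 / 2"
      unfolding r_def by (intro tendsto_intros LIMSEQ_inverse_real_of_nat) simp
    then show "r \<longlonglongrightarrow> 1" by simp
  qed simp
  ultimately show ?thesis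
    using that[OF \<epsilon>] p(2,3) by blast
qed

lemma wnorm_tendsto_imp_pointwise:
  assumes "\<And>n. (\<lambda>z. \<phi> n z - h z) \<in> Hinf b" and "(\<lambda>n. wnorm b (\<lambda>z. \<phi> n z - h z)) \<longlonglongrightarrow> 0"
    and z: "z \<in> ball 0 1"
  shows "(\<lambda>n. \<phi> n z) \<longlonglongrightarrow> h z"
proof -
  define w where "w = (1 - (cmod z)\<^sup>2) powr b"
  have w: "0 < w" using disk_weight_pos[OF z] by (simp add: w_def)
  have "norm (\<phi> n z - h z) \<le> wnorm b (\<lambda>z. \<phi> n z - h z) / w" for n
    using Hinf_weighted_le_wnorm[OF assms(1) z, of n] w by (simp add: w_def field_simps)
  moreover have "(\<lambda>n. wnorm b (\<lambda>z. \<phi> n z - h z) / w) \<longlonglongrightarrow> 0"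
    using tendsto_divide_zero[OF assms(2)] .
  ultimately have "(\<lambda>n. \<phi> n z - h z) \<longlonglongrightarrow> 0"
    by (rule Lim_null_comparison[OF always_eventually[OF allI]])
  then show ?thesis by (simp add: LIM_zero_iff)
qed

text \<open>The Cauchy estimate at p bounds the norm of S_g applied to the test function from below,
  because |f_p'(p)| is of exact size (1-|p|^2)^{-a-1} while |g(p)| is of size at least
  \<epsilon> (1-|p|^2)^{a-b}.\<close>
lemma wnorm_Sg_test_fun_ge:
  assumes g: "g holomorphic_on ball 0 1" and b: "b \<ge> 0" and s: "s > 0"
    and p: "1 / 2 \<le> cmod p" "cmod p < 1"
    and S: "Sg g (test_fun s a p) \<in> Hinf b"
    and \<epsilon>: "0 \<le> \<epsilon>" "\<epsilon> \<le> (1 - (cmod p)\<^sup>2) powr (b - a) * cmod (g p)"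
  shows "\<epsilon> / (2 ^ (s + 1) * 4 powr (b + 1)) \<le> wnorm b (Sg g (test_fun s a p))"
proof -
  define u where "u = 1 - (cmod p)\<^sup>2"
  have u: "0 < u" using p by (simp add: u_def abs_square_less_1)
  have pb: "p \<in> ball 0 1" using p by simp
  have "1 / 2 \<le> real s * cmod p"
    using p s mult_right_mono[of 1 "real s" "cmod p"] by simp
  then have "(1 / 2) / 2 ^ s \<le> real s * cmod p / 2 ^ s"
    by (rule divide_right_mono) simp
  then have "1 / 2 ^ (s + 1) \<le> u powr (a + 1) * cmod (deriv (test_fun s a p) p)"
    using test_fun_deriv_at_center[OF p(2), of a s] by (simp add: u_def)
  then have "1 / 2 ^ (s + 1) * \<epsilon>
      \<le> (u powr (a + 1) * cmod (deriv (test_fun s a p) p)) * (u powr (b - a) * cmod (g p))"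
    using \<epsilon> by (intro mult_mono) (auto simp: u_def)
  also have "\<dots> = u powr (b + 1) * cmod (deriv (Sg g (test_fun s a p)) p)"
    by (simp add: deriv_Sg[OF test_fun_holomorphic[OF p(2)] g pb] norm_mult mult_ac
        flip: powr_add)
  also have "\<dots> \<le> 4 powr (b + 1) * wnorm b (Sg g (test_fun s a p))"
    unfolding u_def by (rule Hinf_deriv_le_wnorm[OF S b pb])
  finally show ?thesis by (simp add: field_simps)
qed

lemma vanishing_if_compact_Sg:
  assumes g: "g holomorphic_on ball 0 1" and a: "a \<ge> 0" and b: "b \<ge> 0"
    and cs: "compact_Sg a b g"
  shows "vanishes_at_circle (\<lambda>z. (1 - (cmod z)\<^sup>2) powr (b - a) * cmod (g z))"
proof (rule ccontr)
  assume "\<not> ?thesis"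
  then obtain \<epsilon> p where \<epsilon>: "\<epsilon> > 0" and p: "\<And>n. 1 / 2 \<le> cmod (p n)" "\<And>n. cmod (p n) < 1"
    and p_lim: "(\<lambda>n. cmod (p n)) \<longlonglongrightarrow> 1"
    and gp: "\<And>n. \<epsilon> \<le> (1 - (cmod (p n))\<^sup>2) powr (b - a) * cmod (g (p n))"
    by (rule not_vanishes_at_circleE) blast
  define s where "s = Suc (nat \<lceil>a\<rceil>)"
  have s: "0 < s" "a < real s" using a by (auto simp: s_def) linarith
  define F where "F n = test_fun s a (p n)" for n
  have F: "F n \<in> Hinf a \<and> wnorm a (F n) \<le> 1" for n
    unfolding F_def using test_fun_Hinf[OF p(2) a] s by simp
  then have SF: "Sg g (F n) \<in> Hinf b" for n
    using cs unfolding compact_Sg_def by blast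
  obtain r h where r: "strict_mono r" and h: "h \<in> Hinf b"
    and conv: "(\<lambda>n. wnorm b (\<lambda>z. Sg g (F (r n)) z - h z)) \<longlonglongrightarrow> 0"
    using cs F unfolding compact_Sg_def by blast
  have Sg_0: "(\<lambda>n. Sg g (F n) z) \<longlonglongrightarrow> 0" if "z \<in> ball 0 1" for z
    unfolding F_def
    by (rule Sg_test_fun_tendsto_zero[OF g that p(2) test_coeff_tendsto_zero[OF p(2) p_lim s(2)]])
  have "h z = 0" if z: "z \<in> ball 0 1" for z
  proof -
    have "(\<lambda>n. Sg g (F (r n)) z) \<longlonglongrightarrow> h z"
      by (rule wnorm_tendsto_imp_pointwise[OF Hinf_diff[OF SF h] conv z])
    moreover have "(\<lambda>n. Sg g (F (r n)) z) \<longlonglongrightarrow> 0"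
      using LIMSEQ_subseq_LIMSEQ[OF Sg_0[OF z] r] by (simp add: comp_def)
    ultimately show ?thesis by (rule LIMSEQ_unique)
  qed
  then have norm_eq: "wnorm b (\<lambda>z. Sg g (F (r n)) z - h z) = wnorm b (Sg g (F (r n)))" for n
    unfolding wnorm_def by (intro SUP_cong) auto
  define \<delta> where "\<delta> = \<epsilon> / (2 ^ (s + 1) * 4 powr (b + 1))"
  have "\<delta> \<le> wnorm b (Sg g (F m))" for m
    unfolding \<delta>_def F_def
    by (rule wnorm_Sg_test_fun_ge[OF g b s(1) p SF[unfolded F_def] less_imp_le[OF \<epsilon>] gp])
  then have "\<delta> \<le> wnorm b (\<lambda>z. Sg g (F (r n)) z - h z)" for n
    by (simp add: norm_eq)
  then have "\<delta> \<le> 0"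
    by (intro LIMSEQ_le_const[OF conv]) blast
  moreover have "\<delta> > 0" using \<epsilon> by (simp add: \<delta>_def)
  ultimately show False by linarith
qed

lemma vanishes_at_circle_mono:
  assumes "vanishes_at_circle u" "\<And>z. cmod z < 1 \<Longrightarrow> v z \<le> u z"
  shows "vanishes_at_circle v"
  using assms unfolding vanishes_at_circle_def by (meson le_less_trans)

lemma one_le_disk_weight_powr_neg:
  assumes "z \<in> ball 0 1" "a \<ge> 0"
  shows "1 \<le> (1 - (cmod z)\<^sup>2) powr (- a)"
proof -
  have "(1 - (cmod z)\<^sup>2) powr a \<le> 1" "0 < (1 - (cmod z)\<^sup>2) powr a"
    using disk_weight_pos[OF assms(1)] assms(2) by (auto intro: powr_le1)
  then show ?thesis by (simp add: powr_minus one_le_inverse)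
qed

lemma holomorphic_vanishing_at_circle_eq_0:
  assumes g: "g holomorphic_on ball 0 1" and van: "vanishes_at_circle (\<lambda>z. cmod (g z))"
    and z0: "z0 \<in> ball 0 1"
  shows "g z0 = 0"
proof -
  have "cmod (g z0) \<le> \<epsilon>" if \<epsilon>: "\<epsilon> > 0" for \<epsilon>
  proof -
    obtain \<rho> where \<rho>: "\<rho> < 1" and small: "\<And>z. \<rho> < cmod z \<Longrightarrow> cmod z < 1 \<Longrightarrow> cmod (g z) < \<epsilon>"
      using vanishes_at_circleE[OF van \<epsilon>] by blast
    define R where "R = (max \<rho> (cmod z0) + 1) / 2"
    have R: "\<rho> < R" "cmod z0 < R" "R < 1" using \<rho> z0 by (auto simp: R_def)
    have R0: "0 < R" using order_le_less_trans[OF norm_ge_zero R(2)] .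
    have sub: "cball 0 R \<subseteq> ball (0::complex) 1" using R by auto
    show ?thesis
    proof (rule maximum_modulus_frontier[of g "ball 0 R"])
      show "g holomorphic_on interior (ball 0 R)"
        using holomorphic_on_subset[OF g, of "ball 0 R"] R by (simp add: subset_ball)
      show "continuous_on (closure (ball 0 R)) g"
        using continuous_on_subset[OF holomorphic_on_imp_continuous_on[OF g] sub] R0 by simp
      fix z :: complex assume "z \<in> frontier (ball 0 R)"
      then have "cmod z = R" using R0 by simp
      then show "cmod (g z) \<le> \<epsilon>" using small[of z] R by simp
    qed (use R in auto)
  qed
  then show ?thesis
    by (metis dense not_le norm_le_zero_iff)
qed

lemma Sg_eq_0:
  assumes "\<forall>w\<in>ball 0 1. g w = 0" and "z \<in> ball 0 1"
  shows "Sg g f z = 0"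
proof -
  have "path_image (linepath 0 z) \<subseteq> ball 0 1"
    using assms(2) by (simp add: closed_segment_subset convex_ball)
  then have "Sg g f z = contour_integral (linepath 0 z) (\<lambda>w. 0)"
    unfolding Sg_def using assms(1) by (intro contour_integral_eq) auto
  then show ?thesis by simp
qed

lemma compact_Sg_zero:
  assumes g: "g holomorphic_on ball 0 1" and g0: "\<forall>z\<in>ball 0 1. g z = 0"
  shows "compact_Sg a 0 g"
  unfolding compact_Sg_def
proof (intro conjI ballI allI impI)
  have "Sg g f \<in> Hinf 0" if "f holomorphic_on ball 0 1" for f
    using Sg_eq_0[OF g0] by (intro HinfI[OF Sg_holomorphic[OF that g], where M = 0]) auto
  then show "Sg g f \<in> Hinf 0" if "f \<in> Hinf a" for f
    using Hinf_holomorphic[OF that] .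
  have zero: "(\<lambda>z. 0) \<in> Hinf 0"
    by (intro HinfI[where M = 0]) auto
  fix F :: "nat \<Rightarrow> complex \<Rightarrow> complex"
  have "wnorm 0 (\<lambda>z. Sg g (F n) z - 0) = 0" for n
    using wnorm_le[of 0 "\<lambda>z. Sg g (F n) z - 0" 0] wnorm_nonneg[OF zero] Sg_eq_0[OF g0]
    by (simp add: wnorm_def)
  then show "\<exists>r h. strict_mono r \<and> h \<in> Hinf 0 \<and> (\<lambda>n. wnorm 0 (\<lambda>z. Sg g (F (r n)) z - h z)) \<longlonglongrightarrow> 0"
    using zero by (intro exI[of _ id] exI[of _ "\<lambda>z. 0"]) (simp add: strict_mono_def)
qed

theorem theorem5:
  fixes g :: "complex \<Rightarrow> complex" and \<alpha> \<beta> :: real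
  assumes "g holomorphic_on ball 0 1" and "\<alpha> \<ge> 0" and "\<beta> \<ge> 0"
  shows "(compact_Sg \<alpha> 0 g \<longleftrightarrow> (\<forall>z\<in>ball 0 1. g z = 0)) \<and>
         (\<beta> > 0 \<longrightarrow>
            (compact_Sg \<alpha> \<beta> g \<longleftrightarrow>
               (\<forall>\<epsilon>>0. \<exists>r<1. \<forall>z. r < cmod z \<and> cmod z < 1 \<longrightarrow>
                   (1 - (cmod z)\<^sup>2) powr (\<beta> - \<alpha>) * cmod (g z) < \<epsilon>)))"
proof (intro conjI impI iffI)
  assume "compact_Sg \<alpha> 0 g"
  then have "vanishes_at_circle (\<lambda>z. (1 - (cmod z)\<^sup>2) powr (0 - \<alpha>) * cmod (g z))"
    by (rule vanishing_if_compact_Sg[OF assms(1,2) order_refl])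
  then have "vanishes_at_circle (\<lambda>z. cmod (g z))"
    by (rule vanishes_at_circle_mono)
      (simp add: mult_le_cancel_right1 one_le_disk_weight_powr_neg[OF _ assms(2)])
  then show "\<forall>z\<in>ball 0 1. g z = 0"
    using holomorphic_vanishing_at_circle_eq_0[OF assms(1)] by blast
next
  show "\<forall>z\<in>ball 0 1. g z = 0 \<Longrightarrow> compact_Sg \<alpha> 0 g"
    by (rule compact_Sg_zero[OF assms(1)])
next
  show "compact_Sg \<alpha> \<beta> g \<Longrightarrow> \<forall>\<epsilon>>0. \<exists>r<1. \<forall>z. r < cmod z \<and> cmod z < 1 \<longrightarrow>
      (1 - (cmod z)\<^sup>2) powr (\<beta> - \<alpha>) * cmod (g z) < \<epsilon>"
    using vanishing_if_compact_Sg[OF assms] by (simp add: vanishes_at_circle_def)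
  show "compact_Sg \<alpha> \<beta> g" if "\<beta> > 0" and "\<forall>\<epsilon>>0. \<exists>r<1. \<forall>z. r < cmod z \<and> cmod z < 1 \<longrightarrow>
      (1 - (cmod z)\<^sup>2) powr (\<beta> - \<alpha>) * cmod (g z) < \<epsilon>"
    using compact_Sg_if_vanishing[OF assms(1,2) that(1)] that(2)
    by (simp add: vanishes_at_circle_def)
qed

end
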